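(* Let $r, K, m, p, q, s, \gamma_A, \gamma_T$ be positive real constants, let $T>0$, and define, for $t\ge 0$ and $y\in\mathbb{R}$, $$f(t,y)=ry\Big(1-\frac{y}{K}\Big)+my\big(1-e^{-\gamma_A t}\big)+py\,e^{-\gamma_A t}-qy\big(1-e^{-\gamma_T t}\big)-sy\,e^{-\gamma_T t}.$$ Consider the initial value problem $\frac{dy}{dt}=f(t,y)$, $y(0)=y_0$, with $y_0>0$. Then this problem has a unique solution on $[0,T]$; this solution remains positive. Moreover, for the solution on $[0,\infty)$, $$\limsup_{t\to\infty} y(t)\le \frac{K(r+m+p)}{r}\qquad\text{and}\qquad \liminf_{t\to\infty} y(t)\ge \frac{K(r-q-s)}{r}.$$
   Context: This is a model for the proportion $y=n$ of damaged cells under a constant dose of inorganic arsenic (damaging, rate constant $\gamma_A$) and black tea (mitigating, rate constant $\gamma_T$): $r$ is a growth rate, $K$ a normalized carrying capacity, and $m,p,q,s$ are positive constants. *)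

theory Defs
  imports "HOL-Analysis.Analysis"
begin

definition arsenic_rhs ::
  "real \<Rightarrow> real \<Rightarrow> real \<Rightarrow> real \<Rightarrow> real \<Rightarrow> real \<Rightarrow> real \<Rightarrow> real \<Rightarrow> real \<Rightarrow> real \<Rightarrow> real" where
  "arsenic_rhs r K m p q s gA gT t y =
     r * y * (1 - y / K) + m * y * (1 - exp (- gA * t)) + p * y * exp (- gA * t)
     - q * y * (1 - exp (- gT * t)) - s * y * exp (- gT * t)"

definition solves_ivp :: "(real \<Rightarrow> real \<Rightarrow> real) \<Rightarrow> real \<Rightarrow> real set \<Rightarrow> (real \<Rightarrow> real) \<Rightarrow> bool" where
  "solves_ivp F y0 I y \<longleftrightarrow> y 0 = y0 \<and>
     (\<forall>t\<in>I. (y has_real_derivative F t (y t)) (at t within I))"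

end

theory Submission
  imports Defs
begin

text \<open>Writing the right-hand side as \<open>a(t) y - c y\<^sup>2\<close> with \<open>c = r / K\<close> turns the model into a
  logistic equation with time-dependent growth rate \<open>a\<close>, and \<open>u = 1 / y\<close> then solves the linear
  equation \<open>u' = c - a(t) u\<close>. Solving it explicitly gives a positive solution; uniqueness follows
  from a Gronwall estimate for \<open>(z - y)\<^sup>2\<close>. Since \<open>r - q - s \<le> a(t) \<le> r + m + p\<close>, comparing \<open>u\<close>
  with solutions of \<open>u' = c - \<alpha> u\<close> for these constant rates \<open>\<alpha>\<close> shows that \<open>1 / y\<close> is
  asymptotically squeezed between \<open>c / (r + m + p)\<close> and \<open>c / (r - q - s)\<close>.\<close>

lemma DERIV_within_nonneg_imp_nondecreasing:
  fixes f f' :: "real \<Rightarrow> real"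
  assumes deriv: "\<And>x. x \<in> {a..b} \<Longrightarrow> (f has_real_derivative f' x) (at x within {a..b})"
    and nonneg: "\<And>x. x \<in> {a..b} \<Longrightarrow> f' x \<ge> 0"
    and t: "t \<in> {a..b}"
  shows "f a \<le> f t"
proof (rule DERIV_nonneg_imp_increasing_open[of a t f])
  show "a \<le> t" using t by simp
  have "continuous_on {a..b} f" by (rule DERIV_continuous_on[OF deriv])
  then show "continuous_on {a..t} f" by (rule continuous_on_subset) (use t in auto)
  fix x assume x: "a < x" "x < t"
  then have "at x within {a..b} = at x" using t by (intro at_within_Icc_at) auto
  then show "\<exists>d. (f has_real_derivative d) (at x) \<and> d \<ge> 0"
    using deriv[of x] nonneg[of x] x t by auto
qed

lemma DERIV_within_nonpos_imp_nonincreasing: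
  fixes f f' :: "real \<Rightarrow> real"
  assumes deriv: "\<And>x. x \<in> {a..b} \<Longrightarrow> (f has_real_derivative f' x) (at x within {a..b})"
    and nonpos: "\<And>x. x \<in> {a..b} \<Longrightarrow> f' x \<le> 0"
    and t: "t \<in> {a..b}"
  shows "f t \<le> f a"
  using DERIV_within_nonneg_imp_nondecreasing[of a b "\<lambda>x. - f x" "\<lambda>x. - f' x"] assms
  by (auto intro: derivative_intros)

lemma Limsup_le_of_eventually_le_tendsto:
  fixes f g :: "'a \<Rightarrow> real"
  assumes "F \<noteq> bot" "eventually (\<lambda>x. f x \<le> g x) F" "(g \<longlongrightarrow> l) F"
  shows "Limsup F (\<lambda>x. ereal (f x)) \<le> ereal l"
proof -
  have "Limsup F (\<lambda>x. ereal (f x)) \<le> Limsup F (\<lambda>x. ereal (g x))"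
    using assms(2) by (intro Limsup_mono) simp
  also have "\<dots> = ereal l"
    using assms(1,3) by (intro lim_imp_Limsup) (simp_all add: lim_ereal)
  finally show ?thesis .
qed

lemma Liminf_ge_of_eventually_ge_tendsto:
  fixes f g :: "'a \<Rightarrow> real"
  assumes "F \<noteq> bot" "eventually (\<lambda>x. g x \<le> f x) F" "(g \<longlongrightarrow> l) F"
  shows "ereal l \<le> Liminf F (\<lambda>x. ereal (f x))"
proof -
  have "ereal l = Liminf F (\<lambda>x. ereal (g x))"
    using assms(1,3) by (intro lim_imp_Liminf[symmetric]) (simp_all add: lim_ereal)
  also have "\<dots> \<le> Liminf F (\<lambda>x. ereal (f x))"
    using assms(2) by (intro Liminf_mono) simp
  finally show ?thesis .
qed

lemma solves_ivp_subset:
  assumes "solves_ivp F y0 S y" "T \<subseteq> S"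
  shows "solves_ivp F y0 T y"
  using assms unfolding solves_ivp_def by (auto intro: has_field_derivative_subset)

definition logistic_rhs :: "(real \<Rightarrow> real) \<Rightarrow> real \<Rightarrow> real \<Rightarrow> real \<Rightarrow> real" where
  "logistic_rhs a c t y = a t * y - c * y\<^sup>2"

lemma logistic_ivp_unique:
  fixes a y z :: "real \<Rightarrow> real"
  assumes a: "continuous_on {0..b} a"
    and y: "solves_ivp (logistic_rhs a c) y0 {0..b} y"
    and z: "solves_ivp (logistic_rhs a c) y0 {0..b} z"
    and t: "t \<in> {0..b}"
  shows "z t = y t"
proof -
  have dy: "(y has_real_derivative a x * y x - c * (y x)\<^sup>2) (at x within {0..b})"
    and dz: "(z has_real_derivative a x * z x - c * (z x)\<^sup>2) (at x within {0..b})"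
    if "x \<in> {0..b}" for x
    using y z that by (auto simp: solves_ivp_def logistic_rhs_def)
  define g where "g x = a x - c * (y x + z x)" for x
  have "continuous_on {0..b} g"
    unfolding g_def using a DERIV_continuous_on[OF dy] DERIV_continuous_on[OF dz]
    by (intro continuous_intros)
  then have "bounded (g ` {0..b})"
    by (intro compact_imp_bounded compact_continuous_image) auto
  then obtain L where L: "\<And>x. x \<in> {0..b} \<Longrightarrow> \<bar>g x\<bar> \<le> L"
    unfolding bounded_iff by (auto simp del: atLeastAtMost_iff)
  \<comment> \<open>\<open>(z - y)' = g (z - y)\<close>, so \<open>(z - y)\<^sup>2\<close> grows at most like \<open>exp (2 L t)\<close>.\<close>
  define h where "h x = (z x - y x)\<^sup>2 * exp (- (2 * L) * x)" for x
  have "h t \<le> h 0"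
  proof (rule DERIV_within_nonpos_imp_nonincreasing[of 0 b h _ t])
    fix x assume x: "x \<in> {0..b}"
    have "(h has_real_derivative
        2 * (z x - y x) * ((a x * z x - c * (z x)\<^sup>2) - (a x * y x - c * (y x)\<^sup>2)) * exp (- (2 * L) * x)
        + (z x - y x)\<^sup>2 * (exp (- (2 * L) * x) * (- (2 * L)))) (at x within {0..b})"
      unfolding h_def
      by (rule derivative_eq_intros dy[OF x] dz[OF x] refl)+ (simp add: algebra_simps)
    then show "(h has_real_derivative 2 * (z x - y x)\<^sup>2 * exp (- (2 * L) * x) * (g x - L))
        (at x within {0..b})"
      unfolding g_def by (simp add: power2_eq_square algebra_simps)
    show "2 * (z x - y x)\<^sup>2 * exp (- (2 * L) * x) * (g x - L) \<le> 0"
      using abs_le_D1[OF L[OF x]] by (intro mult_nonneg_nonpos) auto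
  qed (use t in auto)
  moreover have "h 0 = 0" using y z by (simp add: h_def solves_ivp_def)
  moreover have "h t \<ge> 0" by (simp add: h_def)
  ultimately have "(z t - y t)\<^sup>2 * exp (- (2 * L) * t) = 0" unfolding h_def by linarith
  then show ?thesis by simp
qed

lemma logistic_ivp_positive_solution:
  fixes a :: "real \<Rightarrow> real"
  assumes a: "continuous_on {0..b} a" and "c \<ge> 0" "y0 > 0"
  shows "\<exists>y. solves_ivp (logistic_rhs a c) y0 {0..b} y \<and> (\<forall>t\<in>{0..b}. y t > 0)"
proof -
  define A where "A t = integral {0..t} a" for t
  have dA: "(A has_real_derivative a t) (at t within {0..b})" if "t \<in> {0..b}" for t
    unfolding A_def by (rule integral_has_real_derivative[OF a that])
  have expA: "continuous_on {0..b} (\<lambda>s. exp (A s))"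
    using DERIV_continuous_on[OF dA] by (intro continuous_intros)
  define G where "G t = integral {0..t} (\<lambda>s. exp (A s))" for t
  have dG: "(G has_real_derivative exp (A t)) (at t within {0..b})" if "t \<in> {0..b}" for t
    unfolding G_def by (rule integral_has_real_derivative[OF expA that])
  \<comment> \<open>The solution of the linear equation \<open>u' = c - a u\<close>, \<open>u 0 = 1 / y0\<close>, by variation of constants.\<close>
  define u where "u t = exp (- A t) * (1 / y0 + c * G t)" for t
  have u_pos: "u t > 0" if "t \<in> {0..b}" for t
  proof -
    have "G t \<ge> 0"
      unfolding G_def using that
      by (intro integral_nonneg integrable_continuous_interval continuous_on_subset[OF expA]) auto
    then show ?thesis using \<open>c \<ge> 0\<close> \<open>y0 > 0\<close> by (simp add: u_def add_pos_nonneg)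
  qed
  have du: "(u has_real_derivative c - a t * u t) (at t within {0..b})" if t: "t \<in> {0..b}" for t
  proof -
    have "(u has_real_derivative exp (- A t) * (- a t) * (1 / y0 + c * G t) + exp (- A t) * (c * exp (A t)))
        (at t within {0..b})"
      unfolding u_def by (rule derivative_eq_intros dA[OF t] dG[OF t] refl)+ (simp add: algebra_simps)
    then show ?thesis by (simp add: u_def exp_minus field_simps)
  qed
  define y where "y t = 1 / u t" for t
  have "(y has_real_derivative logistic_rhs a c t (y t)) (at t within {0..b})" if t: "t \<in> {0..b}" for t
  proof -
    have "(y has_real_derivative - ((c - a t * u t) / (u t)\<^sup>2)) (at t within {0..b})"
      unfolding y_def using u_pos[OF t]
      by (rule_tac derivative_eq_intros du[OF t] refl)+ (auto simp: power2_eq_square field_simps)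
    moreover have "- ((c - a t * u t) / (u t)\<^sup>2) = logistic_rhs a c t (y t)"
      using u_pos[OF t] by (simp add: y_def logistic_rhs_def field_simps power2_eq_square)
    ultimately show ?thesis by simp
  qed
  moreover have "y 0 = y0" by (simp add: y_def u_def A_def G_def)
  ultimately have "solves_ivp (logistic_rhs a c) y0 {0..b} y" by (simp add: solves_ivp_def)
  then show ?thesis using u_pos by (auto simp: y_def)
qed

lemma logistic_solution_pos:
  fixes a y :: "real \<Rightarrow> real"
  assumes a: "continuous_on {0..} a" and "c \<ge> 0" "y0 > 0"
    and y: "solves_ivp (logistic_rhs a c) y0 {0..} y" and "t \<ge> 0"
  shows "y t > 0"
proof -
  have a_t: "continuous_on {0..t} a" using a by (rule continuous_on_subset) auto
  obtain w where w: "solves_ivp (logistic_rhs a c) y0 {0..t} w" "\<forall>x\<in>{0..t}. w x > 0"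
    using logistic_ivp_positive_solution[OF a_t \<open>c \<ge> 0\<close> \<open>y0 > 0\<close>] by blast
  have "y t = w t"
    using logistic_ivp_unique[OF a_t w(1) solves_ivp_subset[OF y]] \<open>t \<ge> 0\<close> by auto
  then show ?thesis using w(2) \<open>t \<ge> 0\<close> by simp
qed

lemma logistic_reciprocal_shifted_deriv:
  assumes "(y has_real_derivative logistic_rhs a c t (y t)) (at t within S)" "y t \<noteq> 0" "\<alpha> \<noteq> 0"
  shows "((\<lambda>x. (1 / y x - c / \<alpha>) * exp (\<alpha> * x)) has_real_derivative
           (\<alpha> - a t) * exp (\<alpha> * t) / y t) (at t within S)"
  using assms
  by (auto intro!: derivative_eq_intros simp: logistic_rhs_def field_simps power2_eq_square)

lemma logistic_reciprocal_lower_bound: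
  fixes a y :: "real \<Rightarrow> real"
  assumes y: "solves_ivp (logistic_rhs a c) y0 {0..b} y" and pos: "\<forall>x\<in>{0..b}. y x > 0"
    and rate: "\<forall>x\<in>{0..b}. a x \<le> \<alpha>" and "\<alpha> \<noteq> 0" and t: "t \<in> {0..b}"
  shows "c / \<alpha> + (1 / y0 - c / \<alpha>) * exp (- \<alpha> * t) \<le> 1 / y t"
proof -
  have "(1 / y 0 - c / \<alpha>) * exp (\<alpha> * 0) \<le> (1 / y t - c / \<alpha>) * exp (\<alpha> * t)"
  proof (rule DERIV_within_nonneg_imp_nondecreasing[OF _ _ t])
    fix x assume x: "x \<in> {0..b}"
    have yx: "y x > 0" and ax: "a x \<le> \<alpha>" using pos rate x by auto
    show "((\<lambda>x. (1 / y x - c / \<alpha>) * exp (\<alpha> * x)) has_real_derivative (\<alpha> - a x) * exp (\<alpha> * x) / y x)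
        (at x within {0..b})"
      using y x yx \<open>\<alpha> \<noteq> 0\<close> by (intro logistic_reciprocal_shifted_deriv) (auto simp: solves_ivp_def)
    show "(\<alpha> - a x) * exp (\<alpha> * x) / y x \<ge> 0" using yx ax by simp
  qed
  then have "(1 / y0 - c / \<alpha>) * exp (- \<alpha> * t) \<le> (1 / y t - c / \<alpha>) * exp (\<alpha> * t) * exp (- \<alpha> * t)"
    using y by (simp add: solves_ivp_def)
  then show ?thesis by (simp add: mult.assoc flip: exp_add)
qed

lemma logistic_reciprocal_upper_bound:
  fixes a y :: "real \<Rightarrow> real"
  assumes y: "solves_ivp (logistic_rhs a c) y0 {0..b} y" and pos: "\<forall>x\<in>{0..b}. y x > 0"
    and rate: "\<forall>x\<in>{0..b}. \<beta> \<le> a x" and "\<beta> \<noteq> 0" and t: "t \<in> {0..b}"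
  shows "1 / y t \<le> c / \<beta> + (1 / y0 - c / \<beta>) * exp (- \<beta> * t)"
proof -
  have "(1 / y t - c / \<beta>) * exp (\<beta> * t) \<le> (1 / y 0 - c / \<beta>) * exp (\<beta> * 0)"
  proof (rule DERIV_within_nonpos_imp_nonincreasing[OF _ _ t])
    fix x assume x: "x \<in> {0..b}"
    have yx: "y x > 0" and ax: "\<beta> \<le> a x" using pos rate x by auto
    show "((\<lambda>x. (1 / y x - c / \<beta>) * exp (\<beta> * x)) has_real_derivative (\<beta> - a x) * exp (\<beta> * x) / y x)
        (at x within {0..b})"
      using y x yx \<open>\<beta> \<noteq> 0\<close> by (intro logistic_reciprocal_shifted_deriv) (auto simp: solves_ivp_def)
    show "(\<beta> - a x) * exp (\<beta> * x) / y x \<le> 0"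
      using yx ax by (simp add: divide_nonpos_pos mult_nonpos_nonneg)
  qed
  then have "(1 / y t - c / \<beta>) * exp (\<beta> * t) * exp (- \<beta> * t) \<le> (1 / y0 - c / \<beta>) * exp (- \<beta> * t)"
    using y by (simp add: solves_ivp_def)
  then show ?thesis by (simp add: mult.assoc flip: exp_add)
qed

lemma tendsto_exp_decay_at_top:
  fixes \<alpha> :: real
  assumes "\<alpha> > 0"
  shows "((\<lambda>t. d + e * exp (- \<alpha> * t)) \<longlongrightarrow> d) at_top"
proof -
  have "((\<lambda>t. exp (- \<alpha> * t)) \<longlongrightarrow> 0) at_top"
    using assms
    by (intro filterlim_compose[OF exp_at_bot] filterlim_tendsto_neg_mult_at_bot[OF tendsto_const])
       (auto simp: filterlim_ident)
  then have "((\<lambda>t. d + e * exp (- \<alpha> * t)) \<longlongrightarrow> d + e * 0) at_top"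
    by (intro tendsto_intros)
  then show ?thesis by simp
qed

lemma logistic_Limsup_le:
  fixes a y :: "real \<Rightarrow> real"
  assumes a: "continuous_on {0..} a" and "c > 0" "y0 > 0" "\<alpha> > 0"
    and rate: "\<And>t. t \<ge> 0 \<Longrightarrow> a t \<le> \<alpha>"
    and y: "solves_ivp (logistic_rhs a c) y0 {0..} y"
  shows "Limsup at_top (\<lambda>t. ereal (y t)) \<le> ereal (\<alpha> / c)"
proof -
  define D where "D t = c / \<alpha> + (1 / y0 - c / \<alpha>) * exp (- \<alpha> * t)" for t
  have D_lim: "(D \<longlongrightarrow> c / \<alpha>) at_top"
    unfolding D_def using \<open>\<alpha> > 0\<close> by (rule tendsto_exp_decay_at_top)
  have pos: "y t > 0" if "t \<ge> 0" for t
    using logistic_solution_pos[OF a _ \<open>y0 > 0\<close> y that] \<open>c > 0\<close> by simp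
  have D_le: "D t \<le> 1 / y t" if "t \<ge> 0" for t
    unfolding D_def using solves_ivp_subset[OF y, of "{0..t}"] pos rate that \<open>\<alpha> > 0\<close>
    by (intro logistic_reciprocal_lower_bound[where b = t]) auto
  have "eventually (\<lambda>t. D t > 0) at_top"
    using order_tendstoD(1)[OF D_lim] \<open>c > 0\<close> \<open>\<alpha> > 0\<close> by simp
  then have "eventually (\<lambda>t. y t \<le> 1 / D t) at_top"
    using eventually_ge_at_top[of 0]
  proof eventually_elim
    case (elim t)
    then show ?case using D_le[of t] pos[of t] by (simp add: field_simps)
  qed
  moreover have "((\<lambda>t. 1 / D t) \<longlongrightarrow> \<alpha> / c) at_top"
    using tendsto_divide[OF tendsto_const D_lim, of 1] \<open>c > 0\<close> \<open>\<alpha> > 0\<close> by simp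
  ultimately show ?thesis by (intro Limsup_le_of_eventually_le_tendsto) simp_all
qed

lemma logistic_Liminf_ge:
  fixes a y :: "real \<Rightarrow> real"
  assumes a: "continuous_on {0..} a" and "c > 0" "y0 > 0"
    and rate: "\<And>t. t \<ge> 0 \<Longrightarrow> \<beta> \<le> a t"
    and y: "solves_ivp (logistic_rhs a c) y0 {0..} y"
  shows "ereal (\<beta> / c) \<le> Liminf at_top (\<lambda>t. ereal (y t))"
proof -
  have pos: "y t > 0" if "t \<ge> 0" for t
    using logistic_solution_pos[OF a _ \<open>y0 > 0\<close> y that] \<open>c > 0\<close> by simp
  show ?thesis
  proof (cases "\<beta> > 0")
    case False
    have "eventually (\<lambda>t. 0 \<le> y t) at_top"
      using eventually_ge_at_top[of 0] by eventually_elim (use pos in force)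
    then have "ereal 0 \<le> Liminf at_top (\<lambda>t. ereal (y t))"
      using Liminf_ge_of_eventually_ge_tendsto[of at_top "\<lambda>_. 0" y 0] by simp
    moreover have "\<beta> / c \<le> 0" using False \<open>c > 0\<close> by (simp add: divide_nonpos_pos)
    ultimately show ?thesis by (meson ereal_less_eq(3) order_trans)
  next
    case True
    define D where "D t = c / \<beta> + (1 / y0 - c / \<beta>) * exp (- \<beta> * t)" for t
    have D_lim: "(D \<longlongrightarrow> c / \<beta>) at_top"
      unfolding D_def using True by (rule tendsto_exp_decay_at_top)
    have D_ge: "1 / y t \<le> D t" if "t \<ge> 0" for t
      unfolding D_def using solves_ivp_subset[OF y, of "{0..t}"] pos rate that True
      by (intro logistic_reciprocal_upper_bound[where b = t]) auto
    have "eventually (\<lambda>t. 1 / D t \<le> y t) at_top"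
      using eventually_ge_at_top[of 0]
    proof eventually_elim
      case (elim t)
      have "0 < D t"
        using D_ge[OF elim] pos[OF elim] by (meson less_le_trans zero_less_divide_1_iff)
      then show ?case using D_ge[OF elim] pos[OF elim] by (simp add: field_simps)
    qed
    moreover have "((\<lambda>t. 1 / D t) \<longlongrightarrow> \<beta> / c) at_top"
      using tendsto_divide[OF tendsto_const D_lim, of 1] \<open>c > 0\<close> True by simp
    ultimately show ?thesis by (intro Liminf_ge_of_eventually_ge_tendsto) simp_all
  qed
qed

definition arsenic_growth_rate :: "real \<Rightarrow> real \<Rightarrow> real \<Rightarrow> real \<Rightarrow> real \<Rightarrow> real \<Rightarrow> real \<Rightarrow> real \<Rightarrow> real" where
  "arsenic_growth_rate r m p q s gA gT t =
     r + m * (1 - exp (- gA * t)) + p * exp (- gA * t) - q * (1 - exp (- gT * t)) - s * exp (- gT * t)"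

lemma arsenic_rhs_eq_logistic_rhs:
  "K \<noteq> 0 \<Longrightarrow> arsenic_rhs r K m p q s gA gT = logistic_rhs (arsenic_growth_rate r m p q s gA gT) (r / K)"
  by (auto simp: fun_eq_iff arsenic_rhs_def logistic_rhs_def arsenic_growth_rate_def
      field_simps power2_eq_square)

lemma continuous_on_arsenic_growth_rate: "continuous_on S (arsenic_growth_rate r m p q s gA gT)"
  unfolding arsenic_growth_rate_def by (intro continuous_intros)

lemma arsenic_growth_rate_bounds:
  assumes "m \<ge> 0" "p \<ge> 0" "q \<ge> 0" "s \<ge> 0" "gA \<ge> 0" "gT \<ge> 0" "t \<ge> 0"
  shows "r - q - s \<le> arsenic_growth_rate r m p q s gA gT t"
    and "arsenic_growth_rate r m p q s gA gT t \<le> r + m + p"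
proof -
  have "exp (- gA * t) \<le> 1" "exp (- gT * t) \<le> 1" using assms by auto
  then have "0 \<le> m * (1 - exp (- gA * t))" "m * (1 - exp (- gA * t)) \<le> m"
    "0 \<le> p * exp (- gA * t)" "p * exp (- gA * t) \<le> p"
    "0 \<le> q * (1 - exp (- gT * t))" "q * (1 - exp (- gT * t)) \<le> q"
    "0 \<le> s * exp (- gT * t)" "s * exp (- gT * t) \<le> s"
    using assms by (auto intro: mult_left_le)
  then show "r - q - s \<le> arsenic_growth_rate r m p q s gA gT t"
    and "arsenic_growth_rate r m p q s gA gT t \<le> r + m + p"
    unfolding arsenic_growth_rate_def by linarith+
qed

theorem mainTheorem1:
  fixes r K m p q s gA gT T y0 :: real
  assumes "r > 0" "K > 0" "m > 0" "p > 0" "q > 0" "s > 0" "gA > 0" "gT > 0"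
    and "T > 0" and "y0 > 0"
  shows "(\<exists>y. solves_ivp (arsenic_rhs r K m p q s gA gT) y0 {0..T} y
            \<and> (\<forall>z. solves_ivp (arsenic_rhs r K m p q s gA gT) y0 {0..T} z
                   \<longrightarrow> (\<forall>t\<in>{0..T}. z t = y t))
            \<and> (\<forall>t\<in>{0..T}. y t > 0))
       \<and> (\<forall>y. solves_ivp (arsenic_rhs r K m p q s gA gT) y0 {0..} y \<longrightarrow>
            Limsup at_top (\<lambda>t. ereal (y t)) \<le> ereal (K * (r + m + p) / r)
          \<and> Liminf at_top (\<lambda>t. ereal (y t)) \<ge> ereal (K * (r - q - s) / r))"
proof -
  let ?a = "arsenic_growth_rate r m p q s gA gT" and ?c = "r / K"
  have rhs: "arsenic_rhs r K m p q s gA gT = logistic_rhs ?a ?c"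
    using \<open>K > 0\<close> by (simp add: arsenic_rhs_eq_logistic_rhs)
  have c: "?c > 0" using assms by simp
  have rate: "r - q - s \<le> ?a t" "?a t \<le> r + m + p" if "t \<ge> 0" for t
    using arsenic_growth_rate_bounds[of m p q s gA gT t r] assms that by simp_all
  note cont = continuous_on_arsenic_growth_rate
  obtain y where y: "solves_ivp (logistic_rhs ?a ?c) y0 {0..T} y" "\<forall>t\<in>{0..T}. y t > 0"
    using logistic_ivp_positive_solution[OF cont] c \<open>y0 > 0\<close> by (meson less_imp_le)
  moreover have "\<forall>t\<in>{0..T}. z t = y t" if "solves_ivp (logistic_rhs ?a ?c) y0 {0..T} z" for z
    using logistic_ivp_unique[OF cont y(1) that] by blast
  moreover have "Limsup at_top (\<lambda>t. ereal (w t)) \<le> ereal (K * (r + m + p) / r)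
      \<and> Liminf at_top (\<lambda>t. ereal (w t)) \<ge> ereal (K * (r - q - s) / r)"
    if w: "solves_ivp (logistic_rhs ?a ?c) y0 {0..} w" for w
    using logistic_Limsup_le[OF cont c \<open>y0 > 0\<close> _ rate(2) w]
      logistic_Liminf_ge[OF cont c \<open>y0 > 0\<close> rate(1) w] assms by (simp add: ac_simps)
  ultimately show ?thesis unfolding rhs by blast
qed

end
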